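(* Let $p$ be an odd prime and $n$ an odd positive integer, and let $d=\frac{p^n+1}{p+1}$. Then the power function $F(x)=x^d$ on $\mathrm{GF}(p^n)$ is perfect $c$-nonlinear for $c=-1$.
   Context: For a function $F:\mathrm{GF}(p^n)\to\mathrm{GF}(p^n)$ and $a,b,c\in\mathrm{GF}(p^n)$, let ${}_c\Delta_F(a,b)=\#\{x\in\mathrm{GF}(p^n): F(x+a)-cF(x)=b\}$. The $c$-differential uniformity of $F$ is ${}_c\Delta_F=\max\{{}_c\Delta_F(a,b): a,b\in\mathrm{GF}(p^n),\ \text{and } a\neq 0 \text{ if } c=1\}$. $F$ is perfect $c$-nonlinear (P$c$N) if ${}_c\Delta_F=1$. *)

theory Defs
  imports Main "HOL-Computational_Algebra.Primes"
begin

text \<open>The finite field GF(p^n) is modelled as a type 'a of class field and finite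
  with CARD('a) = p^n (such a field is unique up to isomorphism).\<close>

definition c_diff_count :: "('a::field \<Rightarrow> 'a) \<Rightarrow> 'a \<Rightarrow> 'a \<Rightarrow> 'a \<Rightarrow> nat" where
  "c_diff_count F c a b = card {x. F (x + a) - c * F x = b}"

definition c_diff_uniformity :: "('a::{field,finite} \<Rightarrow> 'a) \<Rightarrow> 'a \<Rightarrow> nat" where
  "c_diff_uniformity F c =
     Max {c_diff_count F c a b | a b. c = 1 \<longrightarrow> a \<noteq> 0}"

definition perfect_c_nonlinear :: "('a::{field,finite} \<Rightarrow> 'a) \<Rightarrow> 'a \<Rightarrow> bool" where
  "perfect_c_nonlinear F c \<longleftrightarrow> c_diff_uniformity F c = 1"

end

theory Submission
  imports Defs "HOL-Library.Cardinality" "HOL-Computational_Algebra.Polynomial"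
    "HOL-Number_Theory.Residues"
begin

text \<open>
  For \<open>c = -1\<close> the count \<open>c_diff_count F (-1) a b\<close> is the number of solutions of
  \<open>(x + a)^d + x^d = b\<close>, so it suffices that every map \<open>x \<mapsto> (x + a)^d + x^d\<close> is injective.
  Scaling reduces this to \<open>a = 1\<close>, and since \<open>e = (q + p)/2\<close> inverts \<open>d\<close> modulo \<open>q - 1\<close>,
  the substitution \<open>y = -x^d/b\<close> reduces it further to the injectivity of
  \<open>G y = (y + 1)^e + y^e\<close>.

  Fix a nonsquare \<open>\<nu>\<close>. As \<open>(w^2)^e = w^(p+1)\<close> and \<open>(\<nu> w^2)^e = -\<nu>^((p+1)/2) w^(p+1)\<close>,
  writing \<open>y + 1\<close> and \<open>y\<close> as squares or \<open>\<nu>\<close> times squares expresses \<open>G y\<close> through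
  \<open>p\<close>-th powers. If \<open>y + 1\<close> and \<open>y\<close> have the same quadratic character, then \<open>2 G y = U + V\<close>
  with \<open>U V = 1\<close> and \<open>U^d + V^d = 4y + 2\<close>. Otherwise \<open>G y\<close> is the rational part of
  \<open>z^p (a - b\<omega>)\<close> for some \<open>z = a + b\<omega>\<close> of norm \<open>\<pm>1\<close> in \<open>GF(q)(\<omega>)\<close>, \<open>\<omega>^2 = \<nu>\<close>, with
  \<open>a^2 + \<nu> b^2 = 2y + 1\<close>. Comparing two such representations of the same value (by Vieta,
  by the Frobenius map on \<open>GF(q)(\<omega>)\<close>, and by the non-squareness of \<open>\<nu>\<close>) shows that
  \<open>G y1 = G y2\<close> forces \<open>y1 = y2\<close>.
\<close>

lemma alternating_geometric_sum:
  fixes x :: "'a::comm_ring_1"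
  assumes "odd n"
  shows "x ^ n + 1 = (x + 1) * (\<Sum>i<n. (- x) ^ i)"
proof -
  have "(- x) ^ n - 1 = (- x - 1) * (\<Sum>i<n. (- x) ^ i)"
    by (rule power_diff_1_eq)
  then show ?thesis
    using assms by (simp add: algebra_simps)
qed

lemma odd_sum_powers_iff:
  fixes x :: "'a::semiring_parity"
  assumes "odd x"
  shows "odd (\<Sum>i<n. x ^ i) \<longleftrightarrow> odd n"
  by (induction n) (use assms in auto)

lemma pred_mult_sum_powers:
  fixes x :: nat
  assumes "x \<ge> 1"
  shows "(x - 1) * (\<Sum>i<n. x ^ i) + 1 = x ^ n"
proof -
  have "int x ^ n - 1 = (int x - 1) * (\<Sum>i<n. int x ^ i)"
    by (rule power_diff_1_eq)
  then have "int ((x - 1) * (\<Sum>i<n. x ^ i) + 1) = int (x ^ n)"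
    using assms by simp
  then show ?thesis
    by (simp only: of_nat_eq_iff)
qed

lemma power_odd_eq_if_square_eq_one:
  fixes c :: "'a::monoid_mult"
  assumes "c ^ 2 = 1" and "odd r"
  shows "c ^ r = c"
proof -
  obtain s where "r = 2 * s + 1"
    using assms(2) by (metis oddE)
  then show ?thesis
    using assms(1) by (simp add: power_mult)
qed

lemma reciprocal_pairs_eq:
  fixes U1 V1 U2 V2 :: "'a::field"
  assumes "U1 * V1 = 1" and "U2 * V2 = 1" and "U1 + V1 = U2 + V2"
  shows "U2 = U1 \<and> V2 = V1 \<or> U2 = V1 \<and> V2 = U1"
proof -
  have "(U2 - U1) * (U2 - V1) = U2 * U2 - U2 * (U1 + V1) + U1 * V1"
    by (simp add: algebra_simps)
  also have "\<dots> = U2 * U2 - U2 * (U2 + V2) + 1"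
    using assms(1,3) by simp
  also have "\<dots> = 0"
    using assms(2) by (simp add: algebra_simps)
  finally have "U2 = U1 \<or> U2 = V1"
    by simp
  then show ?thesis
    using assms(3) by auto
qed

lemma eq_zero_or_minus_one_if_square:
  fixes y :: "'a::field"
  assumes "(2::'a) \<noteq> 0" and "(2 * y + 1) ^ 2 = 1"
  shows "y = 0 \<or> y = -1"
proof -
  have "4 * (y * (y + 1)) = 0"
    using assms(2) by (simp add: algebra_simps power2_eq_square)
  then have "y * (y + 1) = 0"
    using assms(1) by (metis mult_eq_0_iff numeral_Bit0_eq_double)
  then show ?thesis
    by (simp add: add_eq_0_iff2)
qed

section \<open>Finite fields of odd order\<close>

lemma power_card_minus_one_eq_one:
  fixes x :: "'a::{field,finite}"
  assumes "x \<noteq> 0"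
  shows "x ^ (CARD('a) - 1) = 1"
proof -
  let ?U = "UNIV - {0::'a}"
  have "x ^ (CARD('a) - 1) * \<Prod>?U = (\<Prod>y\<in>?U. x * y)"
    by (simp add: prod.distrib card_Diff_singleton)
  also have "\<dots> = \<Prod>?U"
    by (rule prod.reindex_bij_witness[of _ "\<lambda>y. y / x" "\<lambda>y. x * y"]) (use assms in auto)
  finally show ?thesis
    by simp
qed

lemma power_card_eq:
  fixes x :: "'a::{field,finite}"
  shows "x ^ CARD('a) = x"
proof (cases "x = 0")
  case False
  have "CARD('a) = Suc (CARD('a) - 1)"
    using finite_UNIV_card_ge_0 by simp
  then show ?thesis
    using power_card_minus_one_eq_one[OF False] by (metis power_Suc2 mult_1)
qed simp

lemma two_neq_zero_if_odd_card:
  assumes "odd CARD('a::{field,finite})"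
  shows "(2::'a) \<noteq> 0"
proof
  assume "(2::'a) = 0"
  then have "CHAR('a) dvd 2"
    using of_nat_eq_0_iff_char_dvd[of 2, where 'a='a] by simp
  then have "CHAR('a) = 2"
    using CHAR_not_1[where 'a='a] prime_nat_iff[of 2] by auto
  then show False
    using CHAR_dvd_CARD[where 'a='a] assms by simp
qed

lemma minus_one_neq_one_if_odd_card:
  assumes "odd CARD('a::{field,finite})"
  shows "(-1::'a) \<noteq> 1"
  using two_neq_zero_if_odd_card[OF assms] by (simp add: eq_neg_iff_add_eq_0)

lemma card_ge_three_if_odd:
  assumes "odd CARD('a::{field,finite})"
  shows "CARD('a) \<ge> 3"
proof -
  have "card {0::'a, 1} \<le> CARD('a)"
    by (rule card_mono) simp_all
  then show ?thesis
    using assms by simp presburger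
qed

lemma exists_power_half_card_eq_minus_one:
  assumes "odd CARD('a::{field,finite})"
  shows "\<exists>v::'a. v ^ ((CARD('a) - 1) div 2) = -1"
proof -
  define K where "K = (CARD('a) - 1) div 2"
  have card_K: "CARD('a) = 2 * K + 1" "K \<ge> 1"
    using assms card_ge_three_if_odd[OF assms] unfolding K_def by presburger+
  define P where "P = Polynomial.monom (1::'a) K + [:-1:]"
  have "degree P = K"
    unfolding P_def using \<open>K \<ge> 1\<close> by (subst degree_add_eq_left) (simp_all add: degree_monom_eq)
  then have "card {x. poly P x = 0} \<le> K"
    using card_poly_roots_bound[of P] \<open>K \<ge> 1\<close> by fastforce
  then have "card {x::'a. x ^ K = 1} < card (UNIV - {0::'a})"
    using card_K by (simp add: P_def poly_monom card_Diff_singleton)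
  then have "\<not> UNIV - {0::'a} \<subseteq> {x. x ^ K = 1}"
    by (auto dest: card_mono[rotated])
  then obtain v :: 'a where v: "v \<noteq> 0" "v ^ K \<noteq> 1"
    by blast
  have "(v ^ K - 1) * (v ^ K + 1) = (v ^ K) ^ 2 - 1"
    by (simp add: algebra_simps power2_eq_square)
  also have "\<dots> = v ^ (CARD('a) - 1) - 1"
    using card_K by (simp add: power_mult[symmetric] mult.commute)
  also have "\<dots> = 0"
    using power_card_minus_one_eq_one[OF v(1)] by simp
  finally show ?thesis
    using v(2) unfolding K_def by (auto simp: add_eq_0_iff2)
qed

lemma not_square_if_power_half_card_eq_minus_one:
  fixes v :: "'a::{field,finite}"
  assumes "odd CARD('a)" and "v ^ ((CARD('a) - 1) div 2) = -1"
  shows "v \<noteq> w ^ 2"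
proof
  assume "v = w ^ 2"
  moreover have "(CARD('a) - 1) div 2 \<noteq> 0"
    using card_ge_three_if_odd[OF assms(1)] by simp
  ultimately have "w \<noteq> 0"
    using assms(2) by (auto simp: power_0_left)
  have "v ^ ((CARD('a) - 1) div 2) = w ^ (CARD('a) - 1)"
    using \<open>v = w ^ 2\<close> assms(1) by (simp add: power_mult[symmetric])
  then have "(-1::'a) = 1"
    using assms(2) power_card_minus_one_eq_one[OF \<open>w \<noteq> 0\<close>] by simp
  then show False
    using minus_one_neq_one_if_odd_card[OF assms(1)] by simp
qed

lemma card_nonzero_squares_ge:
  "CARD('a::{field,finite}) - 1 \<le> 2 * card ((\<lambda>w::'a. w ^ 2) ` (UNIV - {0}))"
proof -
  let ?Sq = "(\<lambda>w::'a. w ^ 2) ` (UNIV - {0})"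
  have fibre: "card {w::'a. w ^ 2 = s} \<le> 2" if s: "s \<in> ?Sq" for s
  proof -
    obtain r where "s = r ^ 2"
      using s by blast
    then have "{w. w ^ 2 = s} \<subseteq> {r, -r}"
      by (auto simp: power2_eq_iff)
    then have "card {w. w ^ 2 = s} \<le> card {r, -r}"
      by (intro card_mono) simp_all
    also have "\<dots> \<le> 2"
      by (simp add: card_insert_le_m1)
    finally show ?thesis .
  qed
  have "UNIV - {0} = (\<Union>s\<in>?Sq. {w::'a. w ^ 2 = s})"
    by auto
  then have "CARD('a) - 1 \<le> (\<Sum>s\<in>?Sq. card {w::'a. w ^ 2 = s})"
    using card_UN_le[of ?Sq "\<lambda>s. {w::'a. w ^ 2 = s}"] by (simp add: card_Diff_singleton)
  also have "\<dots> \<le> (\<Sum>s\<in>?Sq. 2)"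
    by (rule sum_mono) (rule fibre)
  finally show ?thesis
    by simp
qed

lemma square_or_nonsquare_times_square:
  fixes \<nu> u :: "'a::{field,finite}"
  assumes nonsquare: "\<And>w. \<nu> \<noteq> w ^ 2"
  obtains w where "u = w ^ 2" | w where "u = \<nu> * w ^ 2"
proof -
  define Sq where "Sq = (\<lambda>w::'a. w ^ 2) ` (UNIV - {0})"
  have "\<nu> \<noteq> 0"
    using nonsquare[of 0] by simp
  then have "card ((*) \<nu> ` Sq) = card Sq"
    by (simp add: card_image inj_on_def)
  moreover have "Sq \<inter> (*) \<nu> ` Sq = {}"
  proof -
    have False if "w \<noteq> 0" "r \<noteq> 0" "w ^ 2 = \<nu> * r ^ 2" for w r :: 'a
      using that nonsquare[of "w / r"] by (simp add: power_divide)
    then show ?thesis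
      unfolding Sq_def by fastforce
  qed
  ultimately have "CARD('a) - 1 \<le> card (Sq \<union> (*) \<nu> ` Sq)"
    using card_nonzero_squares_ge[where 'a='a] by (simp add: card_Un_disjoint Sq_def)
  moreover have "Sq \<union> (*) \<nu> ` Sq \<subseteq> UNIV - {0}"
    unfolding Sq_def using \<open>\<nu> \<noteq> 0\<close> by auto
  ultimately have "Sq \<union> (*) \<nu> ` Sq = UNIV - {0}"
    by (intro card_seteq) (auto simp: card_Diff_singleton)
  then show thesis
    using that by (cases "u = 0") (auto simp: Sq_def)
qed

section \<open>Reduction to a single power sum\<close>

lemma perfect_c_nonlinear_if_inj:
  fixes F :: "'a::{field,finite} \<Rightarrow> 'a"
  assumes inj: "\<And>a. inj (\<lambda>x. F (x + a) - c * F x)"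
  shows "perfect_c_nonlinear F c"
proof -
  have count: "c_diff_count F c a b = 1" for a b
  proof -
    have "surj (\<lambda>x. F (x + a) - c * F x)"
      using finite_UNIV_inj_surj[OF _ inj] by simp
    then have "\<exists>x0. b = F (x0 + a) - c * F x0"
      by (rule surjD)
    then obtain x0 where x0: "F (x0 + a) - c * F x0 = b"
      by auto
    have "x = x0" if "F (x + a) - c * F x = b" for x
      by (rule injD[OF inj[of a]]) (simp add: that x0)
    then have "{x. F (x + a) - c * F x = b} = {x0}"
      using x0 by blast
    then show ?thesis
      unfolding c_diff_count_def by simp
  qed
  have "{c_diff_count F c a b | a b. c = 1 \<longrightarrow> a \<noteq> 0} = {1}"
    using count by (auto intro: exI[of _ "1::'a"])
  then show ?thesis
    unfolding perfect_c_nonlinear_def c_diff_uniformity_def by simp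
qed

definition consec_pow_sum :: "nat \<Rightarrow> 'a::comm_semiring_1 \<Rightarrow> 'a" where
  "consec_pow_sum m x = (x + 1) ^ m + x ^ m"

lemma shifted_pow_sum_eq_scaled:
  fixes a x :: "'a::field"
  assumes "a \<noteq> 0"
  shows "(x + a) ^ m + x ^ m = a ^ m * consec_pow_sum m (x / a)"
proof -
  have "x + a = a * (x / a + 1)"
    using assms by (simp add: field_simps)
  then have "(x + a) ^ m = a ^ m * (x / a + 1) ^ m"
    by (simp only: power_mult_distrib)
  moreover have "x ^ m = a ^ m * (x / a) ^ m"
    using assms by (simp add: power_divide)
  ultimately show ?thesis
    unfolding consec_pow_sum_def by (simp add: distrib_left)
qed

lemma inj_shifted_pow_sum:
  fixes a :: "'a::field"
  assumes inj_pow: "inj (\<lambda>x::'a. x ^ m)" and "(2::'a) \<noteq> 0"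
    and inj_sum: "inj (consec_pow_sum m :: 'a \<Rightarrow> 'a)"
  shows "inj (\<lambda>x. (x + a) ^ m + x ^ m)"
proof (cases "a = 0")
  case True
  have "inj (\<lambda>x::'a. 2 * x ^ m)"
    using inj_pow \<open>(2::'a) \<noteq> 0\<close> by (auto simp: inj_def)
  then show ?thesis
    using True by (simp only: add_0_right mult_2)
next
  case False
  have "inj (\<lambda>x. a ^ m * consec_pow_sum m (x / a))"
  proof (rule injI)
    fix x y
    assume "a ^ m * consec_pow_sum m (x / a) = a ^ m * consec_pow_sum m (y / a)"
    then have "consec_pow_sum m (x / a) = consec_pow_sum m (y / a)"
      using False by simp
    then have "x / a = y / a"
      by (rule injD[OF inj_sum])
    then show "x = y"
      using False by simp
  qed
  then show ?thesis
    using shifted_pow_sum_eq_scaled[OF False] by simp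
qed

lemma consec_pow_sum_eq_zero:
  fixes z :: "'a::field"
  assumes inj: "inj (\<lambda>x::'a. x ^ d)" and "odd d" and "consec_pow_sum d z = 0"
  shows "2 * z = -1"
proof -
  have "(z + 1) ^ d = (- z) ^ d"
    using assms(2,3) by (simp add: consec_pow_sum_def eq_neg_iff_add_eq_0)
  then have "z + 1 = - z"
    by (rule injD[OF inj])
  then have "z + (z + 1) = 0"
    by (simp only: add.right_inverse)
  then show ?thesis
    by (simp only: add.assoc[symmetric] add_eq_0_iff2 mult_2)
qed

text \<open>Both \<open>-z^d/b\<close> and \<open>-z^d/b + 1 = (z + 1)^d/b\<close> are \<open>d\<close>-th powers, which \<open>e\<close> undoes.\<close>

lemma consec_pow_sum_inverse_exponent:
  fixes z b :: "'a::field"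
  assumes inverse: "\<And>x::'a. (x ^ d) ^ e = x" and "odd e"
    and "consec_pow_sum d z = b" and "b \<noteq> 0"
  shows "consec_pow_sum e (- (z ^ d) / b) = 1 / b ^ e"
proof -
  have "- (z ^ d) / b + 1 = (z + 1) ^ d / b"
    using assms(3,4) by (simp add: consec_pow_sum_def field_simps)
  then have "consec_pow_sum e (- (z ^ d) / b) = ((z + 1) ^ d / b) ^ e - (z ^ d / b) ^ e"
    using \<open>odd e\<close> by (simp add: consec_pow_sum_def)
  also have "\<dots> = (z + 1) / b ^ e - z / b ^ e"
    by (simp add: power_divide inverse)
  also have "\<dots> = 1 / b ^ e"
    by (simp add: diff_divide_distrib[symmetric])
  finally show ?thesis .
qed

lemma inj_consec_pow_sum_if_inverse_exponent:
  fixes d e :: nat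
  assumes inverse: "\<And>x::'a::field. (x ^ d) ^ e = x"
    and "odd d" and "odd e" and two: "(2::'a) \<noteq> 0"
    and inj_e: "inj (consec_pow_sum e :: 'a \<Rightarrow> 'a)"
  shows "inj (consec_pow_sum d :: 'a \<Rightarrow> 'a)"
proof (rule injI)
  fix z1 z2 :: 'a
  assume eq: "consec_pow_sum d z1 = consec_pow_sum d z2"
  have inj_d: "inj (\<lambda>x::'a. x ^ d)"
    by (metis injI inverse)
  show "z1 = z2"
  proof (cases "consec_pow_sum d z1 = 0")
    case True
    then have "2 * z1 = 2 * z2"
      using eq consec_pow_sum_eq_zero[OF inj_d \<open>odd d\<close>] by simp
    then show ?thesis
      using two by simp
  next
    case False
    define b where "b = consec_pow_sum d z1"
    have "consec_pow_sum e (- (z1 ^ d) / b) = 1 / b ^ e"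
      by (rule consec_pow_sum_inverse_exponent[OF inverse \<open>odd e\<close>]) (use False in \<open>simp_all add: b_def\<close>)
    moreover have "consec_pow_sum e (- (z2 ^ d) / b) = 1 / b ^ e"
      by (rule consec_pow_sum_inverse_exponent[OF inverse \<open>odd e\<close>]) (use False eq in \<open>simp_all add: b_def\<close>)
    ultimately have "consec_pow_sum e (- (z1 ^ d) / b) = consec_pow_sum e (- (z2 ^ d) / b)"
      by (simp only:)
    then have "- (z1 ^ d) / b = - (z2 ^ d) / b"
      by (rule injD[OF inj_e])
    then have "z1 ^ d = z2 ^ d"
      using False unfolding b_def by simp
    then show ?thesis
      by (rule injD[OF inj_d])
  qed
qed

locale odd_prime_power_field =
  fixes p n :: nat and field_type :: "'a::{field,finite} itself"
  assumes prime_p: "prime p" and odd_p: "odd p" and odd_n: "odd n"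
    and card_field: "CARD('a) = p ^ n"
begin

definition q :: nat where "q = p ^ n"
definition d :: nat where "d = (q + 1) div (p + 1)"
definition e :: nat where "e = (q + p) div 2"
definition k :: nat where "k = (p - 1) div 2"
definition K :: nat where "K = (q - 1) div 2"
definition m :: nat where "m = (\<Sum>i<n. p ^ i)"

lemma p_ge_3: "p \<ge> 3"
  using prime_ge_2_nat[OF prime_p] odd_p by presburger

lemma p_eq: "p = 2 * k + 1"
  using odd_p unfolding k_def by presburger

lemma p_minus_1: "p - 1 = 2 * k"
  using p_eq by simp

lemma q_eq_m: "q = (p - 1) * m + 1"
  unfolding q_def m_def using pred_mult_sum_powers[of p n] p_ge_3 by simp

lemma odd_m: "odd m"
  unfolding m_def using odd_sum_powers_iff[OF odd_p] odd_n by simp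

lemma K_eq: "K = k * m"
  unfolding K_def using q_eq_m p_minus_1 by simp

lemma q_eq: "q = 2 * K + 1"
  using q_eq_m p_minus_1 K_eq by simp

lemma d_mult: "(p + 1) * d = q + 1" and odd_d: "odd d"
proof -
  define S where "S = (\<Sum>i<n. (- int p) ^ i)"
  have S: "int q + 1 = (int p + 1) * S"
    using alternating_geometric_sum[OF odd_n, of "int p"] unfolding S_def q_def by simp
  have "odd S"
    using odd_sum_powers_iff[of "- int p" n] odd_p odd_n unfolding S_def by simp
  have "S > 0"
    using S by (smt (verit) mult_nonneg_nonpos of_nat_0_le_iff)
  then have "int (q + 1) = int ((p + 1) * nat S)"
    using S by (simp add: algebra_simps)
  then have q_S: "q + 1 = (p + 1) * nat S"
    by (simp only: of_nat_eq_iff)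
  then have "d = nat S"
    unfolding d_def by (simp only:) (rule nonzero_mult_div_cancel_left, simp)
  then show "(p + 1) * d = q + 1" and "odd d"
    using q_S \<open>odd S\<close> \<open>S > 0\<close> by (simp_all add: even_nat_iff)
qed

lemma k_plus_1_mult_d: "(k + 1) * d = K + 1"
proof -
  have "2 * ((k + 1) * d) = (p + 1) * d"
    by (subst (2) p_eq) simp
  also have "\<dots> = 2 * (K + 1)"
    using d_mult q_eq by simp
  finally have "2 * ((k + 1) * d) = 2 * (K + 1)" .
  then show ?thesis
    by simp
qed

lemma e_eq: "e = K + k + 1"
  unfolding e_def using q_eq p_eq by simp

lemma odd_e: "odd e"
proof -
  have "e = k * (m + 1) + 1"
    using e_eq K_eq by (simp add: algebra_simps)
  then show ?thesis
    using odd_m by simp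
qed

lemma two_e: "2 * e = q + p"
  using e_eq q_eq p_eq by simp

lemma d_mult_e: "d * e = ((d + 1) div 2) * (q - 1) + 1"
proof -
  have "d * e = (d + 1) * K + 1"
    using e_eq k_plus_1_mult_d by (simp add: algebra_simps)
  moreover obtain j where "d + 1 = 2 * j"
    using odd_d by (metis odd_even_add odd_one evenE)
  then have "(d + 1) * K = ((d + 1) div 2) * (q - 1)"
    using q_eq by (simp add: mult_ac)
  ultimately show ?thesis
    by simp
qed

lemma odd_card: "odd CARD('a)"
  using card_field odd_p by simp

lemma two_neq_zero: "(2::'a) \<noteq> 0"
  by (rule two_neq_zero_if_odd_card[OF odd_card])

lemma minus_one_neq_one: "(-1::'a) \<noteq> 1"
  by (rule minus_one_neq_one_if_odd_card[OF odd_card])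

lemma CHAR_eq: "CHAR('a) = p"
proof -
  have "prime CHAR('a)"
    by (rule prime_CHAR_semidom) (simp add: finite_imp_CHAR_pos)
  moreover have "CHAR('a) dvd p ^ n"
    using CHAR_dvd_CARD[where 'a='a] card_field by simp
  ultimately show ?thesis
    using prime_p prime_dvd_power primes_dvd_imp_eq by blast
qed

lemma power_p_add: "(x + y :: 'a) ^ p = x ^ p + y ^ p"
  by (rule freshmans_dream) (simp_all add: CHAR_eq prime_p)

lemma power_p_diff: "(x - y :: 'a) ^ p = x ^ p - y ^ p"
  using power_p_add[of x "- y"] odd_p by simp

lemma power_q: "(x::'a) ^ q = x"
  using power_card_eq[of x] card_field unfolding q_def by simp

lemma power_q_minus_1: "(x::'a) \<noteq> 0 \<Longrightarrow> x ^ (q - 1) = 1"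
  using power_card_minus_one_eq_one[of x] card_field unfolding q_def by simp

lemma power_d_power_e: "((x::'a) ^ d) ^ e = x"
proof (cases "x = 0")
  case True
  then show ?thesis
    using odd_d odd_e by (simp add: power_0_left odd_pos)
next
  case False
  have "(x ^ d) ^ e = (x ^ (q - 1)) ^ ((d + 1) div 2) * x"
    by (simp add: d_mult_e power_add power_mult[symmetric] mult.commute)
  then show ?thesis
    using power_q_minus_1[OF False] by simp
qed

lemma inj_power_d: "inj (\<lambda>x::'a. x ^ d)"
  by (metis injI power_d_power_e)

definition \<nu> :: 'a where "\<nu> = (SOME v. v ^ K = -1)"

lemma \<nu>_power_K: "\<nu> ^ K = -1"
proof -
  have "\<exists>v::'a. v ^ K = -1"
    using exists_power_half_card_eq_minus_one[OF odd_card] card_field unfolding K_def q_def by simp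
  then show ?thesis
    unfolding \<nu>_def by (rule someI_ex)
qed

lemma \<nu>_not_square: "\<nu> \<noteq> w ^ 2"
  using not_square_if_power_half_card_eq_minus_one[OF odd_card] \<nu>_power_K card_field
  unfolding K_def q_def by simp

lemma \<nu>_neq_zero: "\<nu> \<noteq> 0"
  using \<nu>_not_square[of 0] by simp

lemma power_e_power_d: "((x::'a) ^ e) ^ d = x"
  by (metis power_d_power_e power_mult mult.commute)

lemma square_power_e: "((w::'a) ^ 2) ^ e = w ^ (p + 1)"
proof -
  have "(w ^ 2) ^ e = w ^ q * w ^ p"
    by (simp add: power_mult[symmetric] two_e power_add)
  then show ?thesis
    by (simp add: power_q)
qed

definition \<mu> :: 'a where "\<mu> = \<nu> ^ (k + 1)"

lemma \<nu>_power_e: "\<nu> ^ e = - \<mu>"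
  by (simp add: e_eq power_add \<nu>_power_K \<mu>_def)

lemma \<nu>_square_power_e: "(\<nu> * w ^ 2) ^ e = - \<mu> * w ^ (p + 1)"
  by (simp only: power_mult_distrib square_power_e \<nu>_power_e)

lemma \<nu>_power_p: "\<nu> ^ p = \<nu> * (\<nu> ^ k) ^ 2"
  by (subst p_eq) (simp add: power_add power_mult mult.commute)

section \<open>Injectivity of \<open>y \<mapsto> (y + 1)\<^sup>e + y\<^sup>e\<close>\<close>

abbreviation G :: "'a \<Rightarrow> 'a" where "G \<equiv> consec_pow_sum e"

text \<open>A pair \<open>(a, b)\<close> stands for \<open>z = a + b\<omega>\<close> in \<open>GF(q^2)\<close>, where \<open>\<omega>^2 = \<nu>\<close>. Since
  \<open>\<omega>^p = \<nu>^k \<omega>\<close>, we have \<open>z^p (a - b\<omega>) = conj_re a b + conj_im a b \<omega>\<close>.\<close>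

definition conj_re :: "'a \<Rightarrow> 'a \<Rightarrow> 'a" where
  "conj_re a b = a ^ (p + 1) - \<mu> * b ^ (p + 1)"

definition conj_im :: "'a \<Rightarrow> 'a \<Rightarrow> 'a" where
  "conj_im a b = \<nu> ^ k * a * b ^ p - a ^ p * b"

text \<open>For \<open>z\<close> of norm \<open>\<epsilon> = \<pm>1\<close> and \<open>w = z^p (a - b\<omega>)\<close>: \<open>z^p = \<epsilon> w z\<close>, and \<open>w\<close> has norm \<open>1\<close>.\<close>

lemma frobenius_relations:
  assumes norm: "a ^ 2 - \<nu> * b ^ 2 = \<epsilon>" and "\<epsilon> ^ 2 = 1"
  shows "a ^ p = \<epsilon> * (conj_re a b * a + \<nu> * conj_im a b * b)"
    and "\<nu> ^ k * b ^ p = \<epsilon> * (conj_re a b * b + conj_im a b * a)"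
    and "conj_re a b ^ 2 - \<nu> * conj_im a b ^ 2 = 1"
proof -
  define P B N where "P = a ^ p" and "B = b ^ p" and "N = \<nu> ^ k"
  have C: "conj_re a b = P * a - \<nu> * N * B * b"
    unfolding conj_re_def P_def B_def N_def \<mu>_def by (simp add: mult_ac)
  have W: "conj_im a b = N * a * B - P * b"
    unfolding conj_im_def P_def B_def N_def by simp
  have "conj_re a b * a + \<nu> * conj_im a b * b = P * (a ^ 2 - \<nu> * b ^ 2)"
    unfolding C W by (simp add: algebra_simps power2_eq_square)
  then show "a ^ p = \<epsilon> * (conj_re a b * a + \<nu> * conj_im a b * b)"
    using assms by (simp add: P_def power2_eq_square)
  have "conj_re a b * b + conj_im a b * a = N * B * (a ^ 2 - \<nu> * b ^ 2)"
    unfolding C W by (simp add: algebra_simps power2_eq_square)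
  then show "\<nu> ^ k * b ^ p = \<epsilon> * (conj_re a b * b + conj_im a b * a)"
    using assms by (simp add: N_def B_def power2_eq_square mult_ac)
  \<comment> \<open>The norm is multiplicative and commutes with the Frobenius map.\<close>
  have "P ^ 2 - \<nu> * N ^ 2 * B ^ 2 = \<epsilon> ^ p"
  proof -
    have "\<epsilon> ^ p = (a ^ 2) ^ p - (\<nu> * b ^ 2) ^ p"
      using norm power_p_diff by metis
    also have "\<dots> = P ^ 2 - \<nu> ^ p * B ^ 2"
      unfolding P_def B_def by (simp add: power_mult_distrib power_mult[symmetric] mult.commute)
    finally show ?thesis
      using \<nu>_power_p N_def by simp
  qed
  also have "\<epsilon> ^ p = \<epsilon>"
    using power_odd_eq_if_square_eq_one[OF \<open>\<epsilon> ^ 2 = 1\<close> odd_p] .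
  finally have "P ^ 2 - \<nu> * N ^ 2 * B ^ 2 = \<epsilon>" .
  moreover have "conj_re a b ^ 2 - \<nu> * conj_im a b ^ 2 = (P ^ 2 - \<nu> * N ^ 2 * B ^ 2) * (a ^ 2 - \<nu> * b ^ 2)"
    unfolding C W by (simp add: algebra_simps power2_eq_square)
  ultimately show "conj_re a b ^ 2 - \<nu> * conj_im a b ^ 2 = 1"
    using assms by (simp add: power2_eq_square)
qed

lemma power_p_plus_1_diff_add_sum:
  "((x::'a) - y) ^ (p + 1) + (x + y) ^ (p + 1) = 2 * (x ^ (p + 1) + y ^ (p + 1))"
proof -
  have "(x - y) ^ (p + 1) = (x ^ p - y ^ p) * (x - y)"
    and "(x + y) ^ (p + 1) = (x ^ p + y ^ p) * (x + y)"
    by (simp_all only: power_add power_one_right power_p_diff power_p_add)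
  then show ?thesis
    by (simp add: algebra_simps)
qed

text \<open>The two shapes of \<open>G y\<close>, according to whether \<open>y + 1\<close> and \<open>y\<close> have the same
  quadratic character.\<close>

definition pure_witness :: "'a \<Rightarrow> 'a \<Rightarrow> 'a \<Rightarrow> bool" where
  "pure_witness y U V \<longleftrightarrow> U * V = 1 \<and> 2 * G y = U + V \<and> U ^ d + V ^ d = 4 * y + 2"

definition mixed_witness :: "'a \<Rightarrow> 'a \<Rightarrow> 'a \<Rightarrow> 'a \<Rightarrow> bool" where
  "mixed_witness y a b \<epsilon> \<longleftrightarrow>
     \<epsilon> ^ 2 = 1 \<and> a ^ 2 - \<nu> * b ^ 2 = \<epsilon> \<and> a ^ 2 + \<nu> * b ^ 2 = 2 * y + 1 \<and> G y = conj_re a b"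

lemma pure_witness_same_character:
  assumes \<kappa>: "\<kappa> = 1 \<or> \<kappa> = \<nu>" and y1: "y + 1 = \<kappa> * \<alpha> ^ 2" and y: "y = \<kappa> * \<gamma> ^ 2"
  shows "pure_witness y ((\<kappa> * (\<alpha> - \<gamma>) ^ 2) ^ e) ((\<kappa> * (\<alpha> + \<gamma>) ^ 2) ^ e)"
proof -
  obtain c where c: "\<And>x. (\<kappa> * x ^ 2) ^ e = c * x ^ (p + 1)"
    using \<kappa> square_power_e \<nu>_square_power_e by (metis mult_1)
  have "\<kappa> * (\<alpha> ^ 2 - \<gamma> ^ 2) = 1"
    using y1 y by (simp add: algebra_simps)
  have "(\<kappa> * (\<alpha> - \<gamma>) ^ 2) * (\<kappa> * (\<alpha> + \<gamma>) ^ 2) = (\<kappa> * (\<alpha> ^ 2 - \<gamma> ^ 2)) ^ 2"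
    by (simp add: power2_eq_square algebra_simps)
  also have "\<dots> = 1"
    using \<open>\<kappa> * (\<alpha> ^ 2 - \<gamma> ^ 2) = 1\<close> by simp
  finally have "(\<kappa> * (\<alpha> - \<gamma>) ^ 2) * (\<kappa> * (\<alpha> + \<gamma>) ^ 2) = 1" .
  then have "(\<kappa> * (\<alpha> - \<gamma>) ^ 2) ^ e * (\<kappa> * (\<alpha> + \<gamma>) ^ 2) ^ e = 1"
    by (metis power_mult_distrib power_one)
  moreover have "2 * G y = (\<kappa> * (\<alpha> - \<gamma>) ^ 2) ^ e + (\<kappa> * (\<alpha> + \<gamma>) ^ 2) ^ e"
  proof -
    note sum = power_p_plus_1_diff_add_sum[of \<alpha> \<gamma>]
    have "G y = c * (\<alpha> ^ (p + 1) + \<gamma> ^ (p + 1))"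
      unfolding consec_pow_sum_def by (simp only: distrib_left c[symmetric] y1[symmetric] y[symmetric])
    also have "\<dots> = c * ((\<alpha> - \<gamma>) ^ (p + 1) + (\<alpha> + \<gamma>) ^ (p + 1)) / 2"
      unfolding sum using two_neq_zero by simp
    finally have "2 * G y = c * ((\<alpha> - \<gamma>) ^ (p + 1) + (\<alpha> + \<gamma>) ^ (p + 1))"
      using two_neq_zero by (simp add: mult.commute)
    then show ?thesis
      by (simp only: c distrib_left)
  qed
  moreover have "\<kappa> * (\<alpha> - \<gamma>) ^ 2 + \<kappa> * (\<alpha> + \<gamma>) ^ 2 = 2 * (\<kappa> * \<alpha> ^ 2) + 2 * (\<kappa> * \<gamma> ^ 2)"
    by (simp add: power2_eq_square algebra_simps)
  then have "\<kappa> * (\<alpha> - \<gamma>) ^ 2 + \<kappa> * (\<alpha> + \<gamma>) ^ 2 = 4 * y + 2"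
    unfolding y1[symmetric] y[symmetric] by (simp add: algebra_simps)
  ultimately show ?thesis
    unfolding pure_witness_def by (simp add: power_e_power_d)
qed

lemma square_plus_\<nu>_square_power_e: "(a ^ 2) ^ e + (\<nu> * b ^ 2) ^ e = conj_re a b"
  by (simp add: square_power_e \<nu>_square_power_e conj_re_def)

lemma witness_exists: "(\<exists>U V. pure_witness y U V) \<or> (\<exists>a b \<epsilon>. mixed_witness y a b \<epsilon>)"
proof -
  obtain \<alpha> where \<alpha>: "y + 1 = \<alpha> ^ 2 \<or> y + 1 = \<nu> * \<alpha> ^ 2"
    using square_or_nonsquare_times_square[OF \<nu>_not_square] by metis
  obtain \<gamma> where \<gamma>: "y = \<gamma> ^ 2 \<or> y = \<nu> * \<gamma> ^ 2"
    using square_or_nonsquare_times_square[OF \<nu>_not_square] by metis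
  consider \<kappa> where "\<kappa> = 1 \<or> \<kappa> = \<nu>" "y + 1 = \<kappa> * \<alpha> ^ 2" "y = \<kappa> * \<gamma> ^ 2"
    | "y + 1 = \<alpha> ^ 2" "y = \<nu> * \<gamma> ^ 2" | "y + 1 = \<nu> * \<alpha> ^ 2" "y = \<gamma> ^ 2"
    using \<alpha> \<gamma> by (metis mult_1)
  then show ?thesis
  proof cases
    case 1
    then show ?thesis
      using pure_witness_same_character by blast
  next
    case 2
    then have "mixed_witness y \<alpha> \<gamma> 1"
      unfolding mixed_witness_def consec_pow_sum_def
      using square_plus_\<nu>_square_power_e[of \<alpha> \<gamma>] by (simp add: algebra_simps)
    then show ?thesis
      by blast
  next
    case 3
    then have "mixed_witness y \<gamma> \<alpha> (-1)"
      unfolding mixed_witness_def consec_pow_sum_def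
      using square_plus_\<nu>_square_power_e[of \<gamma> \<alpha>] by (simp add: algebra_simps)
    then show ?thesis
      by blast
  qed
qed

lemma four_neq_zero: "(4::'a) \<noteq> 0"
  using two_neq_zero by (metis mult_eq_0_iff numeral_Bit0_eq_double)

lemma power_p_split: "(x::'a) ^ p = x ^ (p - 1) * x"
proof -
  have "p = Suc (p - 1)"
    using p_ge_3 by simp
  then show ?thesis
    by (metis power_Suc2)
qed

text \<open>Since \<open>m = (q - 1)/(p - 1)\<close> is odd, raising to the power \<open>m\<close> fixes \<open>\<pm>1\<close> while sending
  \<open>x^(p-1)\<close> to \<open>1\<close> and \<open>\<nu>^k\<close> to \<open>\<nu>^K = -1\<close>.\<close>

lemma power_p_eq_mult_self:
  assumes "(x::'a) \<noteq> 0" and "x ^ p = c * x" and "c ^ 2 = 1"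
  shows "c = 1"
proof -
  have "x ^ (p - 1) = c"
    using assms(1,2) by (simp add: power_p_split)
  then have "c ^ m = x ^ (q - 1)"
    using q_eq_m by (simp add: power_mult)
  then show ?thesis
    using power_q_minus_1[OF assms(1)] power_odd_eq_if_square_eq_one[OF assms(3) odd_m] by simp
qed

lemma \<nu>_power_k_mult_power_p_eq_mult_self:
  assumes "(x::'a) \<noteq> 0" and "\<nu> ^ k * x ^ p = c * x" and "c ^ 2 = 1"
  shows "c = -1"
proof -
  have "\<nu> ^ k * x ^ (p - 1) = c"
    using assms(1,2) by (simp add: power_p_split mult.assoc[symmetric])
  then have "c ^ m = \<nu> ^ K * x ^ (q - 1)"
    using q_eq_m K_eq by (auto simp: power_mult_distrib power_mult)
  then show ?thesis
    using power_q_minus_1[OF assms(1)] \<nu>_power_K power_odd_eq_if_square_eq_one[OF assms(3) odd_m]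
    by simp
qed

lemma pure_witnesses_eq:
  assumes "pure_witness y1 U1 V1" and "pure_witness y2 U2 V2" and "G y1 = G y2"
  shows "y1 = y2"
proof -
  have "U2 = U1 \<and> V2 = V1 \<or> U2 = V1 \<and> V2 = U1"
    using assms by (intro reciprocal_pairs_eq) (auto simp: pure_witness_def)
  then have "U1 ^ d + V1 ^ d = U2 ^ d + V2 ^ d"
    by auto
  then have "4 * y1 = 4 * y2"
    using assms(1,2) unfolding pure_witness_def by simp
  then show ?thesis
    using four_neq_zero by simp
qed

lemma mixed_witness_conj_im_zero:
  assumes w: "mixed_witness y a b \<epsilon>" and "conj_im a b = 0"
  shows "4 * y + 2 = 2 * G y"
proof -
  have \<epsilon>: "\<epsilon> ^ 2 = 1" and norm: "a ^ 2 - \<nu> * b ^ 2 = \<epsilon>" and sum: "a ^ 2 + \<nu> * b ^ 2 = 2 * y + 1"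
    using w unfolding mixed_witness_def by auto
  note R = frobenius_relations[OF norm \<epsilon>]
  define c where "c = \<epsilon> * conj_re a b"
  have "c ^ 2 = 1"
    using R(3) \<epsilon> \<open>conj_im a b = 0\<close> unfolding c_def by (simp add: power_mult_distrib)
  have "a = 0 \<or> b = 0"
  proof (rule ccontr)
    assume "\<not> (a = 0 \<or> b = 0)"
    then have "a \<noteq> 0" and "b \<noteq> 0"
      by auto
    have "a ^ p = c * a" and "\<nu> ^ k * b ^ p = c * b"
      using R(1,2) \<open>conj_im a b = 0\<close> unfolding c_def by (simp_all add: mult_ac)
    then have "c = 1" and "c = -1"
      using power_p_eq_mult_self[OF \<open>a \<noteq> 0\<close>] \<nu>_power_k_mult_power_p_eq_mult_self[OF \<open>b \<noteq> 0\<close>]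
        \<open>c ^ 2 = 1\<close> by simp_all
    then show False
      using minus_one_neq_one by simp
  qed
  then have "2 * y + 1 = \<epsilon> \<or> 2 * y + 1 = - \<epsilon>"
    using norm sum by auto
  then have "(2 * y + 1) ^ 2 = 1"
    using \<epsilon> by auto
  then have "y = 0 \<or> y = -1"
    by (rule eq_zero_or_minus_one_if_square[OF two_neq_zero])
  moreover have "e \<noteq> 0"
    using odd_e by (metis odd_pos less_irrefl)
  ultimately show ?thesis
    using odd_e by (auto simp: consec_pow_sum_def)
qed

lemma pure_mixed_witnesses_eq:
  assumes pw: "pure_witness y1 U V" and mw: "mixed_witness y2 a b \<epsilon>" and G: "G y1 = G y2"
  shows "y1 = y2"
proof -
  have UV: "U * V = 1" and sum: "2 * G y1 = U + V" and pow: "U ^ d + V ^ d = 4 * y1 + 2"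
    using pw unfolding pure_witness_def by auto
  have \<epsilon>: "\<epsilon> ^ 2 = 1" and norm: "a ^ 2 - \<nu> * b ^ 2 = \<epsilon>" and re: "G y2 = conj_re a b"
    using mw unfolding mixed_witness_def by auto
  define c where "c = G y1"
  have "(U - V) ^ 2 = (U + V) ^ 2 - 4 * (U * V)"
    by (simp add: algebra_simps power2_eq_square)
  also have "\<dots> = (2 * c) ^ 2 - 4"
    unfolding c_def sum[symmetric] UV by simp
  finally have disc: "(U - V) ^ 2 = 4 * (c ^ 2 - 1)"
    by (simp add: algebra_simps power2_eq_square)
  have c_im: "c ^ 2 - 1 = \<nu> * conj_im a b ^ 2"
    using frobenius_relations(3)[OF norm \<epsilon>] re G unfolding c_def by (simp add: algebra_simps)
  show ?thesis
  proof (cases "conj_im a b = 0")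
    case False
    then have "\<nu> = ((U - V) / (2 * conj_im a b)) ^ 2"
      using disc c_im four_neq_zero by (simp add: power_divide power_mult_distrib)
    then show ?thesis
      using \<nu>_not_square by blast
  next
    case True
    then have "c ^ 2 = 1"
      using c_im by simp
    then have "U = V"
      using disc by (simp add: power2_eq_square)
    then have "2 * U = 2 * c"
      using sum unfolding c_def by (simp only: mult_2)
    then have "U = c"
      using two_neq_zero by simp
    then have "U ^ 2 = 1"
      using \<open>c ^ 2 = 1\<close> by simp
    then have "U ^ d = U"
      using odd_d by (rule power_odd_eq_if_square_eq_one)
    then have "4 * y1 + 2 = 2 * c"
      unfolding pow[symmetric] \<open>U = V\<close>[symmetric] \<open>U = c\<close>[symmetric] by (simp only: mult_2)
    also have "\<dots> = 4 * y2 + 2"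
      using mixed_witness_conj_im_zero[OF mw True] G unfolding c_def by simp
    finally show ?thesis
      using four_neq_zero by simp
  qed
qed

text \<open>If \<open>z1 = a1 + b1\<omega>\<close> and \<open>z2 = a2 + b2\<omega>\<close> share the value \<open>w\<close> of \<open>z^p (a - b\<omega>)\<close>, then
  \<open>zi^p = \<epsilon>i w zi\<close>, so \<open>u + v\<omega> = z2 (a1 - b1\<omega>)\<close> satisfies \<open>(u + v\<omega>)^p = \<epsilon>1 \<epsilon>2 (u + v\<omega>)\<close>.\<close>

lemma frobenius_conj_product:
  assumes n1: "a1 ^ 2 - \<nu> * b1 ^ 2 = \<epsilon>1" and "\<epsilon>1 ^ 2 = 1"
    and n2: "a2 ^ 2 - \<nu> * b2 ^ 2 = \<epsilon>2" and "\<epsilon>2 ^ 2 = 1"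
    and re: "conj_re a2 b2 = conj_re a1 b1" and im: "conj_im a2 b2 = conj_im a1 b1"
  shows "(a2 * a1 - \<nu> * b2 * b1) ^ p = \<epsilon>1 * \<epsilon>2 * (a2 * a1 - \<nu> * b2 * b1)"
    and "\<nu> ^ k * (b2 * a1 - a2 * b1) ^ p = \<epsilon>1 * \<epsilon>2 * (b2 * a1 - a2 * b1)"
proof -
  define C W where "C = conj_re a1 b1" and "W = conj_im a1 b1"
  note R1 = frobenius_relations[OF n1 \<open>\<epsilon>1 ^ 2 = 1\<close>, folded C_def W_def]
  note R2 = frobenius_relations[OF n2 \<open>\<epsilon>2 ^ 2 = 1\<close>, unfolded re im, folded C_def W_def]
  have "(a2 * a1 - \<nu> * b2 * b1) ^ p = a2 ^ p * a1 ^ p - \<nu> * (\<nu> ^ k * b2 ^ p) * (\<nu> ^ k * b1 ^ p)"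
    by (simp add: power_p_diff power_mult_distrib \<nu>_power_p power2_eq_square mult_ac)
  also have "\<dots> = (\<epsilon>2 * (C * a2 + \<nu> * W * b2)) * (\<epsilon>1 * (C * a1 + \<nu> * W * b1))
      - \<nu> * (\<epsilon>2 * (C * b2 + W * a2)) * (\<epsilon>1 * (C * b1 + W * a1))"
    by (simp only: R1(1,2) R2(1,2))
  also have "\<dots> = \<epsilon>1 * \<epsilon>2 * ((C ^ 2 - \<nu> * W ^ 2) * (a2 * a1 - \<nu> * b2 * b1))"
    by (simp add: algebra_simps power2_eq_square)
  finally show "(a2 * a1 - \<nu> * b2 * b1) ^ p = \<epsilon>1 * \<epsilon>2 * (a2 * a1 - \<nu> * b2 * b1)"
    using R1(3) by simp
  have "\<nu> ^ k * (b2 * a1 - a2 * b1) ^ p = (\<nu> ^ k * b2 ^ p) * a1 ^ p - a2 ^ p * (\<nu> ^ k * b1 ^ p)"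
    by (simp add: power_p_diff algebra_simps)
  also have "\<dots> = (\<epsilon>2 * (C * b2 + W * a2)) * (\<epsilon>1 * (C * a1 + \<nu> * W * b1))
      - (\<epsilon>2 * (C * a2 + \<nu> * W * b2)) * (\<epsilon>1 * (C * b1 + W * a1))"
    by (simp only: R1(1,2) R2(1,2))
  also have "\<dots> = \<epsilon>1 * \<epsilon>2 * ((C ^ 2 - \<nu> * W ^ 2) * (b2 * a1 - a2 * b1))"
    by (simp add: algebra_simps power2_eq_square)
  finally show "\<nu> ^ k * (b2 * a1 - a2 * b1) ^ p = \<epsilon>1 * \<epsilon>2 * (b2 * a1 - a2 * b1)"
    using R1(3) by simp
qed


lemma mixed_witnesses_same_conj_eq:
  assumes w1: "mixed_witness y1 a1 b1 \<epsilon>1" and w2: "mixed_witness y2 a2 b2 \<epsilon>2"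
    and re: "conj_re a2 b2 = conj_re a1 b1" and im: "conj_im a2 b2 = conj_im a1 b1"
  shows "y1 = y2"
proof -
  have \<epsilon>1: "\<epsilon>1 ^ 2 = 1" and n1: "a1 ^ 2 - \<nu> * b1 ^ 2 = \<epsilon>1" and s1: "a1 ^ 2 + \<nu> * b1 ^ 2 = 2 * y1 + 1"
    using w1 unfolding mixed_witness_def by auto
  have \<epsilon>2: "\<epsilon>2 ^ 2 = 1" and n2: "a2 ^ 2 - \<nu> * b2 ^ 2 = \<epsilon>2" and s2: "a2 ^ 2 + \<nu> * b2 ^ 2 = 2 * y2 + 1"
    using w2 unfolding mixed_witness_def by auto
  define u v \<delta> where "u = a2 * a1 - \<nu> * b2 * b1" and "v = b2 * a1 - a2 * b1" and "\<delta> = \<epsilon>1 * \<epsilon>2"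
  note frob = frobenius_conj_product[OF n1 \<epsilon>1 n2 \<epsilon>2 re im, folded u_def v_def \<delta>_def]
  have "\<delta> ^ 2 = 1"
    using \<epsilon>1 \<epsilon>2 unfolding \<delta>_def by (simp add: power_mult_distrib)
  have norm: "u ^ 2 - \<nu> * v ^ 2 = \<delta>"
  proof -
    have "u ^ 2 - \<nu> * v ^ 2 = (a2 ^ 2 - \<nu> * b2 ^ 2) * (a1 ^ 2 - \<nu> * b1 ^ 2)"
      unfolding u_def v_def by (simp add: algebra_simps power2_eq_square)
    then show ?thesis
      using n1 n2 unfolding \<delta>_def by (simp add: mult.commute)
  qed
  have "v = 0"
  proof (rule ccontr)
    assume "v \<noteq> 0"
    then have "\<delta> = -1"
      by (rule \<nu>_power_k_mult_power_p_eq_mult_self[OF _ frob(2) \<open>\<delta> ^ 2 = 1\<close>])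
    moreover have "u = 0"
    proof (rule ccontr)
      assume "u \<noteq> 0"
      then have "\<delta> = 1"
        by (rule power_p_eq_mult_self[OF _ frob(1) \<open>\<delta> ^ 2 = 1\<close>])
      then show False
        using \<open>\<delta> = -1\<close> minus_one_neq_one by simp
    qed
    ultimately have "\<nu> = (1 / v) ^ 2"
      using norm \<open>v \<noteq> 0\<close> by (simp add: field_simps)
    then show False
      using \<nu>_not_square by blast
  qed
  then have "u \<noteq> 0"
    using norm \<open>\<delta> ^ 2 = 1\<close> by auto
  then have "\<delta> = 1"
    by (rule power_p_eq_mult_self[OF _ frob(1) \<open>\<delta> ^ 2 = 1\<close>])
  have "\<epsilon>2 = \<epsilon>1 * \<epsilon>1 * \<epsilon>2"
    using \<epsilon>1 by (simp add: power2_eq_square)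
  also have "\<dots> = \<epsilon>1"
    using \<open>\<delta> = 1\<close> unfolding \<delta>_def by (simp add: mult.assoc)
  finally have "\<epsilon>2 = \<epsilon>1" .
  have b1: "\<nu> * b1 ^ 2 = a1 ^ 2 - \<epsilon>1" and b2: "\<nu> * b2 ^ 2 = a2 ^ 2 - \<epsilon>1"
    using n1 n2 \<open>\<epsilon>2 = \<epsilon>1\<close> by (simp_all add: algebra_simps)
  have "a2 ^ 2 * (\<nu> * b1 ^ 2) = \<nu> * (a2 * b1) ^ 2"
    by (simp add: power_mult_distrib mult_ac)
  also have "\<dots> = \<nu> * (b2 * a1) ^ 2"
    using \<open>v = 0\<close> unfolding v_def by simp
  also have "\<dots> = a1 ^ 2 * (\<nu> * b2 ^ 2)"
    by (simp add: power_mult_distrib mult_ac)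
  finally have "a2 ^ 2 * (\<nu> * b1 ^ 2) = a1 ^ 2 * (\<nu> * b2 ^ 2)" .
  then have "a2 ^ 2 * (a1 ^ 2 - \<epsilon>1) = a1 ^ 2 * (a2 ^ 2 - \<epsilon>1)"
    unfolding b1 b2 .
  then have "\<epsilon>1 * (a1 ^ 2 - a2 ^ 2) = 0"
    by (simp add: algebra_simps)
  then have "a1 ^ 2 = a2 ^ 2"
    using \<epsilon>1 by auto
  moreover have "2 * y1 + 1 = 2 * a1 ^ 2 - \<epsilon>1" and "2 * y2 + 1 = 2 * a2 ^ 2 - \<epsilon>1"
    using n1 s1 n2 s2 \<open>\<epsilon>2 = \<epsilon>1\<close> by (simp_all add: algebra_simps)
  ultimately have "2 * y1 + 1 = 2 * y2 + 1"
    by simp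
  then show ?thesis
    using two_neq_zero by simp
qed


lemma mixed_witnesses_eq:
  assumes w1: "mixed_witness y1 a1 b1 \<epsilon>1" and w2: "mixed_witness y2 a2 b2 \<epsilon>2" and G: "G y1 = G y2"
  shows "y1 = y2"
proof -
  have re: "conj_re a2 b2 = conj_re a1 b1"
    using w1 w2 G unfolding mixed_witness_def by simp
  have "conj_re a1 b1 ^ 2 - \<nu> * conj_im a1 b1 ^ 2 = 1" and "conj_re a2 b2 ^ 2 - \<nu> * conj_im a2 b2 ^ 2 = 1"
    using frobenius_relations(3) w1 w2 unfolding mixed_witness_def by auto
  then have "conj_re a1 b1 ^ 2 - \<nu> * conj_im a2 b2 ^ 2 = conj_re a1 b1 ^ 2 - \<nu> * conj_im a1 b1 ^ 2"
    using re by simp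
  then have "conj_im a2 b2 ^ 2 = conj_im a1 b1 ^ 2"
    using \<nu>_neq_zero by (auto dest: diff_left_imp_eq)
  moreover have "conj_im a2 (- b2) = - conj_im a2 b2"
    using odd_p unfolding conj_im_def by simp
  ultimately consider "conj_im a2 b2 = conj_im a1 b1" | "conj_im a2 (- b2) = conj_im a1 b1"
    by (auto simp: power2_eq_iff)
  then show ?thesis
  proof cases
    case 1
    then show ?thesis
      using mixed_witnesses_same_conj_eq[OF w1 w2 re] by simp
  next
    case 2
    \<comment> \<open>Replacing \<open>z2\<close> by its conjugate changes the sign of \<open>conj_im\<close> only.\<close>
    have "even (p + 1)"
      using odd_p by simp
    then have "mixed_witness y2 a2 (- b2) \<epsilon>2" and "conj_re a2 (- b2) = conj_re a1 b1"
      using w2 re unfolding mixed_witness_def conj_re_def by simp_all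
    then show ?thesis
      using mixed_witnesses_same_conj_eq[OF w1] 2 by blast
  qed
qed

lemma inj_G: "inj G"
proof (rule injI)
  fix y1 y2
  assume "G y1 = G y2"
  then show "y1 = y2"
    using witness_exists[of y1] witness_exists[of y2] pure_witnesses_eq
      pure_mixed_witnesses_eq[of y1] pure_mixed_witnesses_eq[of y2] mixed_witnesses_eq
    by (metis (no_types))
qed

end

theorem mainTheorem5:
  fixes p n :: nat and F :: "'a::{field,finite} \<Rightarrow> 'a"
  assumes "prime p" and "odd p" and "odd n" and "n > 0"
    and "card (UNIV :: 'a set) = p ^ n"
    and "F = (\<lambda>x. x ^ ((p ^ n + 1) div (p + 1)))"
  shows "perfect_c_nonlinear F (-1)"
proof -
  \<comment> \<open>The hypothesis \<open>n > 0\<close> is implied by \<open>odd n\<close>.\<close>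
  interpret odd_prime_power_field p n "TYPE('a)"
    using assms(1-3,5) by unfold_locales
  have F: "F = (\<lambda>x. x ^ d)"
    using assms(6) unfolding d_def q_def by simp
  have "inj (consec_pow_sum d :: 'a \<Rightarrow> 'a)"
    using inj_consec_pow_sum_if_inverse_exponent[OF power_d_power_e odd_d odd_e two_neq_zero inj_G] .
  then have "inj (\<lambda>x. (x + a) ^ d + x ^ d)" for a :: 'a
    by (rule inj_shifted_pow_sum[OF inj_power_d two_neq_zero])
  then show ?thesis
    by (intro perfect_c_nonlinear_if_inj) (simp add: F)
qed

end
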